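(* Let $q\ge5$ be odd. The $\mathrm{U}\Gamma$-lines (non-tangent unisecants of the twisted cubic $\mathcal{C}$ lying in an osculating plane) form one orbit under $G_q$. The subgroup of $G_q$ fixing a $\mathrm{U}\Gamma$-line has size $q-1$. For the $\mathrm{U}\Gamma$-line $\ell$ through $P_0=P(0,0,0,1)$ and $P(0,1,0,0)$, every element of the subgroup of $G_q$ fixing $\ell$ has a matrix of the form $\begin{pmatrix}1&0&0&0\\0&d&0&0\\0&0&d^2&0\\0&0&0&d^3\end{pmatrix}$, $d\in\mathbb{F}_q^*$.
   Context: $\mathrm{PG}(3,q)$ has points $P(x_0,x_1,x_2,x_3)$; $\boldsymbol{\pi}(c_0,c_1,c_2,c_3)$ is the plane $c_0x_0+c_1x_1+c_2x_2+c_3x_3=0$. For $t\in\mathbb{F}_q$ let $P_t=P(t^3,t^2,t,1)$, $P_\infty=P(1,0,0,0)$; the twisted cubic is $\mathcal{C}=\{P_t\}$. The osculating planes are $\pi_{\mathrm{osc}}(t)=\boldsymbol{\pi}(1,-3t,3t^2,-t^3)$ ($t\in\mathbb{F}_q$), $\pi_{\mathrm{osc}}(\infty)=\boldsymbol{\pi}(0,0,0,1)$. The tangent at $P_t$ ($t\in\mathbb{F}_q$) is the line through $P_t$ and $P(3t^2,2t,1,0)$; the tangent at $P_\infty$ is $x_2=x_3=0$. A $\mathrm{U}\Gamma$-line is a line meeting $\mathcal{C}$ in exactly one point, not a tangent, contained in an osculating plane. $G_q$ is the group of projectivities mapping $\mathcal{C}$ to itself; for $q\ge5$ its elements are $x\mapsto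 xM$ on row vectors, $M=\begin{pmatrix} a^3&a^2c&ac^2&c^3\\ 3a^2b&a^2d+2abc&bc^2+2acd&3c^2d\\ 3ab^2&b^2c+2abd&ad^2+2bcd&3cd^2\\ b^3&b^2d&bd^2&d^3\end{pmatrix}$, $ad-bc\ne0$, up to scalar. *)

theory Defs
  imports "HOL-Analysis.Analysis"
begin

type_synonym 'a vec4 = "'a ^ 4"
type_synonym 'a pt = "'a vec4 set"  \<comment> \<open>a point = set of nonzero multiples of a vector\<close>

definition vec4 :: "'a::zero \<Rightarrow> 'a \<Rightarrow> 'a \<Rightarrow> 'a \<Rightarrow> 'a vec4" where
  "vec4 x0 x1 x2 x3 = (\<chi> i::4. if i = 0 then x0 else if i = 1 then x1 else if i = 2 then x2 else x3)"

definition mat4 :: "'a vec4 \<Rightarrow> 'a vec4 \<Rightarrow> 'a vec4 \<Rightarrow> 'a vec4 \<Rightarrow> 'a ^ 4 ^ 4" where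
  "mat4 r0 r1 r2 r3 = (\<chi> i::4. if i = 0 then r0 else if i = 1 then r1 else if i = 2 then r2 else r3)"

definition pt :: "'a::field vec4 \<Rightarrow> 'a pt" where
  "pt v = {c *s v | c. c \<noteq> 0}"

definition points :: "'a::field pt set" where
  "points = {pt v | v. v \<noteq> 0}"

definition lin_indep2 :: "'a::field vec4 \<Rightarrow> 'a vec4 \<Rightarrow> bool" where
  "lin_indep2 u w \<longleftrightarrow> (\<forall>a b. a *s u + b *s w = 0 \<longrightarrow> a = 0 \<and> b = 0)"

definition line_through :: "'a::field vec4 \<Rightarrow> 'a vec4 \<Rightarrow> 'a pt set" where
  "line_through u w = {pt (a *s u + b *s w) | a b. a \<noteq> 0 \<or> b \<noteq> 0}"

definition lines :: "'a::field pt set set" where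
  "lines = {line_through u w | u w. lin_indep2 u w}"

definition plane :: "'a::field vec4 \<Rightarrow> 'a pt set" where
  "plane c = {pt v | v. v \<noteq> 0 \<and> (\<Sum>i\<in>UNIV. c $ i * v $ i) = 0}"

definition Pt :: "'a::field \<Rightarrow> 'a pt" where
  "Pt t = pt (vec4 (t^3) (t^2) t 1)"

definition Pinf :: "'a::field pt" where
  "Pinf = pt (vec4 1 0 0 0)"

definition cubic :: "'a::field pt set" where
  "cubic = range Pt \<union> {Pinf}"

definition osc_plane :: "'a::field \<Rightarrow> 'a pt set" where
  "osc_plane t = plane (vec4 1 (-3*t) (3*t^2) (-(t^3)))"

definition osc_plane_inf :: "'a::field pt set" where
  "osc_plane_inf = plane (vec4 0 0 0 1)"

definition osc_planes :: "'a::field pt set set" where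
  "osc_planes = range osc_plane \<union> {osc_plane_inf}"

definition tangent :: "'a::field \<Rightarrow> 'a pt set" where
  "tangent t = line_through (vec4 (t^3) (t^2) t 1) (vec4 (3*t^2) (2*t) 1 0)"

definition tangent_inf :: "'a::field pt set" where
  "tangent_inf = line_through (vec4 1 0 0 0) (vec4 0 1 0 0)"

definition tangents :: "'a::field pt set set" where
  "tangents = range tangent \<union> {tangent_inf}"

definition UGamma_lines :: "'a::field pt set set" where
  "UGamma_lines = {l \<in> lines. card (l \<inter> cubic) = 1 \<and> l \<notin> tangents \<and>
                     (\<exists>\<pi>\<in>osc_planes. l \<subseteq> \<pi>)}"

text \<open>Projectivity induced by the matrix M acting on row vectors, x \<mapsto> xM, as a map
  on (sets of) points; invariant under scaling M by a nonzero scalar.\<close>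
definition proj_map :: "'a::field ^ 4 ^ 4 \<Rightarrow> 'a pt \<Rightarrow> 'a pt" where
  "proj_map M S = {w. \<exists>v\<in>S. \<exists>c. c \<noteq> 0 \<and> w = c *s (v v* M)}"

definition cubic_mat :: "'a::field \<Rightarrow> 'a \<Rightarrow> 'a \<Rightarrow> 'a \<Rightarrow> 'a ^ 4 ^ 4" where
  "cubic_mat a b c d = mat4
     (vec4 (a^3) (a^2*c) (a*c^2) (c^3))
     (vec4 (3*a^2*b) (a^2*d + 2*a*b*c) (b*c^2 + 2*a*c*d) (3*c^2*d))
     (vec4 (3*a*b^2) (b^2*c + 2*a*b*d) (a*d^2 + 2*b*c*d) (3*c*d^2))
     (vec4 (b^3) (b^2*d) (b*d^2) (d^3))"

definition Gq :: "('a::field pt \<Rightarrow> 'a pt) set" where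
  "Gq = {proj_map (cubic_mat a b c d) | a b c d. a*d - b*c \<noteq> 0}"

definition act_line :: "('a pt \<Rightarrow> 'a pt) \<Rightarrow> 'a pt set \<Rightarrow> 'a pt set" where
  "act_line g l = g ` l"

definition stabilizer :: "'a::field pt set \<Rightarrow> ('a pt \<Rightarrow> 'a pt) set" where
  "stabilizer l = {g \<in> Gq. act_line g l = l}"

end

theory Submission
  imports Defs "HOL-Library.Disjoint_Sets"
begin

(* Parametrise C homogeneously by (x:y), so that P_t = (t:1) and P_inf = (1:0).  Then the matrix
  cubic_mat a b c d acts on the point, tangent and osculating plane at (x:y) exactly as the
  substitution (x,y) |-> (ax+by, cx+dy) does, so G_q preserves C, its tangents and its osculating
  planes, hence the set of U-Gamma lines.  Since PGL(2,q) is transitive on the parameters, every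
  U-Gamma line can be moved into the osculating plane x0 = 0 at P_0; there it is a line through
  P_0 other than the tangent, i.e. the line through P(0,0,0,1) and P(0,1,e,0) for some e, and the
  substitution (x,y) |-> (x, ex/2 + y) moves the line l through P(0,0,0,1) and P(0,1,0,0) onto it
  (this uses q odd).  A matrix of G_q fixing l must map P(0,0,0,1) and P(0,1,0,0) into l, which
  forces b = c = 0; so the stabiliser of l consists of the q - 1 maps diag(1,d,d^2,d^3), and
  every other stabiliser is conjugate to it. *)

lemma exhaust_4_from_0: "(i::4) = 0 \<or> i = 1 \<or> i = 2 \<or> i = 3"
proof -
  have "(4::4) = 0" by simp
  then show ?thesis using exhaust_4[of i] by metis
qed

lemma UNIV_4_from_0: "(UNIV :: 4 set) = {0, 1, 2, 3}"
  using exhaust_4_from_0 by blast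

lemma sum_UNIV_4: "sum f (UNIV :: 4 set) = f 0 + f 1 + f 2 + f 3"
  unfolding UNIV_4_from_0 by (simp add: ac_simps)

lemma vec4_nth [simp]:
  "vec4 a b c d $ 0 = a" "vec4 a b c d $ 1 = b" "vec4 a b c d $ 2 = c" "vec4 a b c d $ 3 = d"
  by (simp_all add: vec4_def)

lemma vec4_collapse: "vec4 (v$0) (v$1) (v$2) (v$3) = (v :: 'a::zero ^ 4)"
  unfolding vec_eq_iff vec4_def using exhaust_4_from_0 by auto

lemma vec4_eq_iff: "vec4 a b c d = vec4 a' b' c' d' \<longleftrightarrow> a = a' \<and> b = b' \<and> c = c' \<and> d = (d'::'a::zero)"
  by (metis vec4_nth)

lemma vec4_eq_0_iff [simp]: "vec4 a b c d = (0::'a::zero ^ 4) \<longleftrightarrow> a = 0 \<and> b = 0 \<and> c = 0 \<and> d = 0"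
  by (metis vec4_collapse vec4_eq_iff zero_index)

lemma vec4_smult [simp]: "k *s vec4 a b c d = vec4 (k*a) (k*b) (k*c) (k*(d::'a::ring))"
  by (subst vec4_collapse[symmetric]) simp

lemma vec4_add [simp]: "vec4 a b c d + vec4 a' b' c' d' = vec4 (a+a') (b+b') (c+c') (d+(d'::'a::ring))"
  by (subst vec4_collapse[symmetric]) simp

lemma mat4_nth [simp]: "mat4 a b c d $ 0 = a" "mat4 a b c d $ 1 = b" "mat4 a b c d $ 2 = c" "mat4 a b c d $ 3 = d"
  by (simp_all add: mat4_def)

lemma mat4_collapse: "mat4 (M$0) (M$1) (M$2) (M$3) = (M :: 'a ^ 4 ^ 4)"
  unfolding vec_eq_iff mat4_def using exhaust_4_from_0 by auto

lemma vector_mat4_mult: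
  "(v::'a::comm_ring_1^4) v* mat4 r0 r1 r2 r3 = (v$0) *s r0 + (v$1) *s r1 + (v$2) *s r2 + (v$3) *s r3"
  by (simp add: vector_matrix_mult_def vec_eq_iff sum_UNIV_4)

lemma vec4_mat4_mult [simp]:
  "vec4 x0 x1 x2 x3 v* mat4 (vec4 a0 a1 a2 a3) (vec4 b0 b1 b2 b3) (vec4 c0 c1 c2 c3) (vec4 d0 d1 d2 (d3::'a::comm_ring_1))
   = vec4 (x0*a0+x1*b0+x2*c0+x3*d0) (x0*a1+x1*b1+x2*c1+x3*d1) (x0*a2+x1*b2+x2*c2+x3*d2) (x0*a3+x1*b3+x2*c3+x3*d3)"
  by (simp only: vector_mat4_mult vec4_nth vec4_smult vec4_add)

lemma mat4_vec4_mult [simp]: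
  "mat4 (vec4 a0 a1 a2 a3) (vec4 b0 b1 b2 b3) (vec4 c0 c1 c2 c3) (vec4 d0 d1 d2 (d3::'a::comm_ring_1)) *v vec4 x0 x1 x2 x3
   = vec4 (a0*x0+a1*x1+a2*x2+a3*x3) (b0*x0+b1*x1+b2*x2+b3*x3) (c0*x0+c1*x1+c2*x2+c3*x3) (d0*x0+d1*x1+d2*x2+d3*x3)"
  by (subst vec4_collapse[symmetric]) (simp add: matrix_vector_mult_def sum_UNIV_4)

lemma mat4_matrix_mult: "mat4 r0 r1 r2 r3 ** (M::'a::comm_ring_1^4^4) = mat4 (r0 v* M) (r1 v* M) (r2 v* M) (r3 v* M)"
proof -
  have "(A ** M) $ i = (A $ i) v* M" for A :: "'a^4^4" and i
    by (simp add: matrix_matrix_mult_def vector_matrix_mult_def vec_eq_iff)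
  then show ?thesis by (metis mat4_collapse mat4_nth)
qed

section \<open>Binary forms and their symmetric cube\<close>

lemma det_nonzero_pair:
  assumes "a*d - b*c \<noteq> 0" "x \<noteq> 0 \<or> y \<noteq> 0"
  shows "a*x + b*y \<noteq> 0 \<or> c*x + d*(y::'a::field) \<noteq> 0"
proof -
  have "(a*d - b*c)*x = d*(a*x+b*y) - b*(c*x+d*y)" "(a*d - b*c)*y = a*(c*x+d*y) - c*(a*x+b*y)"
    by (simp_all add: algebra_simps)
  then show ?thesis using assms by auto
qed

definition cubic_vec :: "'a::field \<Rightarrow> 'a \<Rightarrow> 'a vec4" where
  "cubic_vec x y = vec4 (x^3) (x^2*y) (x*y^2) (y^3)"

(* The derivative p X_x + r X_y of X = cubic_vec at (x, y). *)
definition cubic_deriv_vec :: "'a::field \<Rightarrow> 'a \<Rightarrow> 'a \<Rightarrow> 'a \<Rightarrow> 'a vec4" where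
  "cubic_deriv_vec x y p r = vec4 (3*x^2*p) (2*x*y*p + x^2*r) (y^2*p + 2*x*y*r) (3*y^2*r)"

definition osc_vec :: "'a::field \<Rightarrow> 'a \<Rightarrow> 'a vec4" where
  "osc_vec x y = vec4 (y^3) (-3*x*y^2) (3*x^2*y) (-(x^3))"

lemma cubic_mat_rows:
  "cubic_mat a b c d = mat4 (cubic_vec a c) (cubic_deriv_vec a c b d) (cubic_deriv_vec b d a c) (cubic_vec b d)"
  unfolding cubic_mat_def cubic_vec_def cubic_deriv_vec_def by (simp add: vec4_eq_iff algebra_simps)

lemma cubic_vec_mult: "cubic_vec x y v* cubic_mat a b c d = cubic_vec (a*x+b*y) (c*x+d*y)"
  unfolding cubic_mat_def cubic_vec_def vec4_mat4_mult vec4_eq_iff by (intro conjI; algebra)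

lemma cubic_deriv_vec_mult:
  "cubic_deriv_vec x y p r v* cubic_mat a b c d = cubic_deriv_vec (a*x+b*y) (c*x+d*y) (a*p+b*r) (c*p+d*r)"
  unfolding cubic_mat_def cubic_deriv_vec_def vec4_mat4_mult vec4_eq_iff by (intro conjI; algebra)

lemma cubic_mat_osc_vec: "cubic_mat a b c d *v osc_vec (a*x+b*y) (c*x+d*y) = (a*d-b*c)^3 *s osc_vec x y"
  unfolding cubic_mat_def osc_vec_def mat4_vec4_mult vec4_smult vec4_eq_iff by (intro conjI; algebra)

lemma cubic_mat_mult: "cubic_mat a1 b1 c1 d1 ** cubic_mat a2 b2 c2 d2 =
   cubic_mat (a1*a2+c1*b2) (b1*a2+d1*b2) (a1*c2+c1*d2) (b1*c2+d1*d2)"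
  unfolding cubic_mat_rows[of a1 b1 c1 d1] mat4_matrix_mult cubic_vec_mult cubic_deriv_vec_mult
  unfolding cubic_mat_rows by (simp add: ac_simps)

lemma cubic_mat_1: "cubic_mat 1 0 0 1 = (mat 1 :: 'a::field^4^4)"
  unfolding vec_eq_iff cubic_mat_def mat4_def vec4_def mat_def using exhaust_4_from_0 by auto

lemma vector_cubic_mat_scalar: "v v* cubic_mat k 0 0 k = k^3 *s (v::'a::field^4)"
  by (subst (1 2) vec4_collapse[symmetric])
    (simp add: cubic_mat_def vec4_eq_iff algebra_simps power2_eq_square power3_eq_cube)

lemma cubic_mat_adjugate:
  "cubic_mat a b c d ** cubic_mat d (-b) (-c) a = cubic_mat (a*d-b*c) 0 0 (a*d-b*c)"
  "cubic_mat d (-b) (-c) a ** cubic_mat a b c d = cubic_mat (a*d-b*c) 0 0 (a*d-b*c)"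
  by (simp_all add: cubic_mat_mult algebra_simps)

lemma vector_cubic_mat_adjugate:
  "v v* cubic_mat a b c d v* cubic_mat d (-b) (-c) a = (a*d-b*c)^3 *s v"
  "v v* cubic_mat d (-b) (-c) a v* cubic_mat a b c d = (a*d-b*c)^3 *s v"
  by (simp_all add: vector_matrix_mul_assoc cubic_mat_adjugate vector_cubic_mat_scalar)

section \<open>Points and projectivities\<close>

lemma pt_self: "v \<in> pt v"
  unfolding pt_def by (intro CollectI exI[of _ 1]) simp

lemma ex_smult_smult_iff:
  assumes "k \<noteq> 0"
  shows "(\<exists>c. c \<noteq> 0 \<and> u = c *s (k *s v)) \<longleftrightarrow> (\<exists>c. c \<noteq> 0 \<and> u = c *s (v :: 'a::field ^ 'n))"
proof
  assume "\<exists>c. c \<noteq> 0 \<and> u = c *s (k *s v)"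
  then obtain c where "c \<noteq> 0" "u = c *s (k *s v)" by blast
  then have "c * k \<noteq> 0 \<and> u = (c * k) *s v" using assms by (simp add: vector_smult_assoc)
  then show "\<exists>c. c \<noteq> 0 \<and> u = c *s v" by blast
next
  assume "\<exists>c. c \<noteq> 0 \<and> u = c *s v"
  then obtain c where "c \<noteq> 0" "u = c *s v" by blast
  then have "c / k \<noteq> 0 \<and> u = (c / k) *s (k *s v)" using assms by (simp add: vector_smult_assoc)
  then show "\<exists>c. c \<noteq> 0 \<and> u = c *s (k *s v)" by blast
qed

lemma pt_smult: assumes "k \<noteq> 0" shows "pt (k *s v) = pt v"
  unfolding pt_def set_eq_iff mem_Collect_eq conj_commute[of "_ = _"] ex_smult_smult_iff[OF assms] by simp

lemma pt_eq_iff: "pt v = pt w \<longleftrightarrow> (\<exists>c. c \<noteq> 0 \<and> v = c *s w)"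
proof
  assume "pt v = pt w"
  then have "v \<in> pt w" using pt_self[of v] by simp
  then show "\<exists>c. c \<noteq> 0 \<and> v = c *s w" unfolding pt_def by blast
next
  assume "\<exists>c. c \<noteq> 0 \<and> v = c *s w"
  then obtain c where "c \<noteq> 0" "v = c *s w" by blast
  then show "pt v = pt w" by (simp add: pt_smult)
qed

lemma proj_map_pt: "proj_map M (pt v) = pt (v v* M)"
proof -
  have "(\<exists>u\<in>pt v. \<exists>c. c \<noteq> 0 \<and> w = c *s (u v* M)) \<longleftrightarrow> (\<exists>c. c \<noteq> 0 \<and> w = c *s (v v* M))" for w
  proof
    assume "\<exists>u\<in>pt v. \<exists>c. c \<noteq> 0 \<and> w = c *s (u v* M)"
    then obtain k c where "k \<noteq> 0" "c \<noteq> 0" "w = c *s ((k *s v) v* M)" unfolding pt_def by blast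
    then have "c * k \<noteq> 0 \<and> w = (c * k) *s (v v* M)"
      by (simp add: scalar_vector_matrix_assoc vector_smult_assoc)
    then show "\<exists>c. c \<noteq> 0 \<and> w = c *s (v v* M)" by blast
  qed (use pt_self in blast)
  then show ?thesis unfolding proj_map_def pt_def[of "v v* M"] by blast
qed

lemma proj_map_comp: "proj_map A (proj_map B S) = proj_map (B ** A) S"
proof -
  have "(\<exists>u. (\<exists>v\<in>S. \<exists>c. c \<noteq> 0 \<and> u = c *s (v v* B)) \<and> (\<exists>c. c \<noteq> 0 \<and> w = c *s (u v* A)))
        \<longleftrightarrow> (\<exists>v\<in>S. \<exists>c. c \<noteq> 0 \<and> w = c *s (v v* (B ** A)))" for w
  proof
    assume "\<exists>u. (\<exists>v\<in>S. \<exists>c. c \<noteq> 0 \<and> u = c *s (v v* B)) \<and> (\<exists>c. c \<noteq> 0 \<and> w = c *s (u v* A))"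
    then obtain v c c' where "v \<in> S" "c \<noteq> 0" "c' \<noteq> 0" "w = c' *s ((c *s (v v* B)) v* A)" by blast
    then have "v \<in> S \<and> c' * c \<noteq> 0 \<and> w = (c' * c) *s (v v* (B ** A))"
      by (simp add: scalar_vector_matrix_assoc vector_smult_assoc vector_matrix_mul_assoc)
    then show "\<exists>v\<in>S. \<exists>c. c \<noteq> 0 \<and> w = c *s (v v* (B ** A))" by blast
  next
    assume "\<exists>v\<in>S. \<exists>c. c \<noteq> 0 \<and> w = c *s (v v* (B ** A))"
    then obtain v c where "v \<in> S" "c \<noteq> 0" "w = c *s ((1 *s (v v* B)) v* A)"
      by (auto simp: vector_matrix_mul_assoc)
    then show "\<exists>u. (\<exists>v\<in>S. \<exists>c. c \<noteq> 0 \<and> u = c *s (v v* B)) \<and> (\<exists>c. c \<noteq> 0 \<and> w = c *s (u v* A))"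
      using one_neq_zero by blast
  qed
  then show ?thesis unfolding proj_map_def by blast
qed

lemma proj_map_eqI:
  assumes "k \<noteq> 0" and "\<And>v. v v* M' = k *s (v v* M)"
  shows "proj_map M' = proj_map M"
  unfolding proj_map_def assms(2) ex_smult_smult_iff[OF assms(1)] ..

lemma proj_map_mat1_pt [simp]: "proj_map (mat 1) (pt v) = pt v"
  by (simp add: proj_map_pt)

lemma proj_map_mat1_image: "S \<subseteq> range pt \<Longrightarrow> proj_map (mat 1) ` S = S"
  by (force simp: image_iff)

lemma proj_map_cubic_mat_smult:
  assumes "k \<noteq> 0"
  shows "proj_map (cubic_mat (k*a) (k*b) (k*c) (k*d)) = proj_map (cubic_mat a b c d)"
proof (rule proj_map_eqI)
  show "k^3 \<noteq> 0" using assms by simp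
  have "cubic_mat (k*a) (k*b) (k*c) (k*d) = cubic_mat k 0 0 k ** cubic_mat a b c d"
    by (simp add: cubic_mat_mult)
  then show "v v* cubic_mat (k*a) (k*b) (k*c) (k*d) = k^3 *s (v v* cubic_mat a b c d)" for v
    by (simp add: vector_matrix_mul_assoc[symmetric] vector_cubic_mat_scalar scalar_vector_matrix_assoc)
qed

lemma GqI: "a*d - b*c \<noteq> 0 \<Longrightarrow> proj_map (cubic_mat a b c d) \<in> Gq"
  unfolding Gq_def by blast

lemma GqE:
  assumes "g \<in> Gq"
  obtains a b c d where "a*d - b*c \<noteq> 0" "g = proj_map (cubic_mat a b c d)"
  using assms unfolding Gq_def by blast

lemma Gq_comp: assumes "g \<in> Gq" "h \<in> Gq" shows "g \<circ> h \<in> Gq"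
proof -
  obtain a1 b1 c1 d1 where 1: "a1*d1 - b1*c1 \<noteq> 0" "g = proj_map (cubic_mat a1 b1 c1 d1)"
    using assms(1) by (rule GqE)
  obtain a2 b2 c2 d2 where 2: "a2*d2 - b2*c2 \<noteq> 0" "h = proj_map (cubic_mat a2 b2 c2 d2)"
    using assms(2) by (rule GqE)
  have "g \<circ> h = proj_map (cubic_mat (a2*a1+c2*b1) (b2*a1+d2*b1) (a2*c1+c2*d1) (b2*c1+d2*d1))"
    by (simp add: 1 2 fun_eq_iff proj_map_comp cubic_mat_mult)
  moreover have "(a2*a1+c2*b1)*(b2*c1+d2*d1) - (b2*a1+d2*b1)*(a2*c1+c2*d1) = (a2*d2-b2*c2)*(a1*d1-b1*c1)"
    by (simp add: algebra_simps)
  ultimately show ?thesis using 1 2 by (auto intro!: GqI)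
qed

lemma Gq_comp_proj_map_mat1: assumes "g \<in> Gq" shows "g \<circ> proj_map (mat 1) = g" "proj_map (mat 1) \<circ> g = g"
  using assms by (auto elim!: GqE simp: fun_eq_iff proj_map_comp)

lemma Gq_inverse:
  assumes "g \<in> Gq"
  obtains g' where "g' \<in> Gq" "g' \<circ> g = proj_map (mat 1)" "g \<circ> g' = proj_map (mat 1)"
proof -
  obtain a b c d where 1: "a*d - b*c \<noteq> 0" "g = proj_map (cubic_mat a b c d)" using assms by (rule GqE)
  let ?D = "a*d - b*c"
  have "proj_map (cubic_mat ?D 0 0 ?D) = proj_map (mat 1)"
    using proj_map_cubic_mat_smult[OF 1(1), of 1 0 0 1] by (simp add: cubic_mat_1)
  then have "proj_map (cubic_mat d (-b) (-c) a) \<circ> g = proj_map (mat 1)"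
    and "g \<circ> proj_map (cubic_mat d (-b) (-c) a) = proj_map (mat 1)"
    by (simp_all add: 1 fun_eq_iff proj_map_comp cubic_mat_adjugate)
  moreover have "proj_map (cubic_mat d (-b) (-c) a) \<in> Gq"
    using 1 by (intro GqI) (simp add: algebra_simps)
  ultimately show ?thesis using that by blast
qed

lemma Gq_image_inverse:
  assumes "g \<in> Gq" "S \<subseteq> range pt"
  obtains g' where "g' \<in> Gq" "g' ` g ` S = S" "g ` g' ` S = S"
proof -
  obtain g' where g': "g' \<in> Gq" "g' \<circ> g = proj_map (mat 1)" "g \<circ> g' = proj_map (mat 1)"
    using assms(1) by (rule Gq_inverse)
  have "g' ` g ` S = S" "g ` g' ` S = S"
    by (simp_all only: image_comp g'(2,3) proj_map_mat1_image[OF assms(2)])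
  with g'(1) show ?thesis by (rule that)
qed

lemma Gq_inj_on_points: assumes "g \<in> Gq" shows "inj_on g (range pt)"
proof (rule inj_onI)
  fix P Q assume "P \<in> range pt" "Q \<in> range pt" "g P = g Q"
  obtain g' where inv: "g' \<circ> g = proj_map (mat 1)" using Gq_inverse[OF assms] by blast
  have left_inv: "g' (g R) = R" if "R \<in> range pt" for R
  proof -
    obtain v where "R = pt v" using \<open>R \<in> range pt\<close> by blast
    have "g' (g R) = (g' \<circ> g) R" by simp
    also have "\<dots> = R" unfolding inv \<open>R = pt v\<close> by simp
    finally show ?thesis .
  qed
  have "P = g' (g P)" using left_inv[OF \<open>P \<in> range pt\<close>] by simp
  also have "\<dots> = Q" using left_inv[OF \<open>Q \<in> range pt\<close>] \<open>g P = g Q\<close> by simp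
  finally show "P = Q" .
qed

lemma line_through_eq_image:
  "line_through u w = (\<lambda>(a, b). pt (a *s u + b *s w)) ` {(a, b). a \<noteq> 0 \<or> b \<noteq> 0}"
  unfolding line_through_def by auto

lemma proj_map_image_line_through: "proj_map M ` line_through u w = line_through (u v* M) (w v* M)"
  unfolding line_through_eq_image image_image
  by (intro image_cong refl) (auto simp: proj_map_pt vector_matrix_left_distrib scalar_vector_matrix_assoc)

lemma line_through_subset_points: "line_through u w \<subseteq> range pt"
  unfolding line_through_def by auto

lemma lines_subset_points: "l \<in> lines \<Longrightarrow> l \<subseteq> range pt"
  unfolding lines_def using line_through_subset_points by blast

lemma pt_in_line_through: "pt u \<in> line_through u w" "pt w \<in> line_through u w"
  unfolding line_through_def
  by (intro CollectI exI[of _ 1] exI[of _ 0]; simp) (intro CollectI exI[of _ 0] exI[of _ 1]; simp)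

lemma smult_add_smult_combine:
  "a *s (\<alpha> *s u + \<beta> *s w) + b *s (\<gamma> *s u + \<delta> *s w) = (a*\<alpha> + b*\<gamma>) *s u + (a*\<beta> + b*\<delta>) *s (w::'a::field^4)"
  by (simp add: vec_eq_iff algebra_simps)

lemma line_through_change_basis_subset:
  assumes "\<alpha>*\<delta> - \<beta>*\<gamma> \<noteq> 0"
  shows "line_through (\<alpha> *s u + \<beta> *s w) (\<gamma> *s u + \<delta> *s w) \<subseteq> line_through u (w::'a::field^4)"
proof
  fix P assume "P \<in> line_through (\<alpha> *s u + \<beta> *s w) (\<gamma> *s u + \<delta> *s w)"
  then obtain a b where P: "P = pt ((a*\<alpha> + b*\<gamma>) *s u + (a*\<beta> + b*\<delta>) *s w)" and "a \<noteq> 0 \<or> b \<noteq> 0"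
    unfolding line_through_def smult_add_smult_combine by blast
  then have "a*\<alpha> + b*\<gamma> \<noteq> 0 \<or> a*\<beta> + b*\<delta> \<noteq> 0"
    using det_nonzero_pair[of \<alpha> \<delta> \<gamma> \<beta> a b] assms by (simp add: mult.commute)
  then show "P \<in> line_through u w" unfolding P line_through_def by blast
qed

lemma line_through_smult: "k \<noteq> 0 \<Longrightarrow> line_through (k *s u) (k *s w) = line_through u (w::'a::field^4)"
proof -
  assume "k \<noteq> 0"
  have "pt (a *s (k *s u) + b *s (k *s w)) = pt (a *s u + b *s w)" for a b
  proof -
    have "a *s (k *s u) + b *s (k *s w) = k *s (a *s u + b *s w)" by (simp add: vec_eq_iff algebra_simps)
    then show ?thesis by (simp only: pt_smult[OF \<open>k \<noteq> 0\<close>])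
  qed
  then show ?thesis unfolding line_through_def by simp
qed

lemma line_through_change_basis:
  assumes det: "\<alpha>*\<delta> - \<beta>*\<gamma> \<noteq> 0"
  shows "line_through (\<alpha> *s u + \<beta> *s w) (\<gamma> *s u + \<delta> *s w) = line_through u (w::'a::field^4)"
    (is "line_through ?u ?w = _")
proof
  let ?D = "\<alpha>*\<delta> - \<beta>*\<gamma>"
  have "line_through u w = line_through (?D *s u) (?D *s w)"
    by (rule line_through_smult[symmetric, OF det])
  also have "\<dots> = line_through (\<delta> *s ?u + (-\<beta>) *s ?w) ((-\<gamma>) *s ?u + \<alpha> *s ?w)"
    by (rule arg_cong2[where f = line_through]) (simp_all add: vec_eq_iff algebra_simps)
  also have "\<dots> \<subseteq> line_through ?u ?w"
    by (rule line_through_change_basis_subset) (use det in \<open>simp add: algebra_simps\<close>)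
  finally show "line_through u w \<subseteq> line_through ?u ?w" .
qed (rule line_through_change_basis_subset[OF det])

lemma lin_indep2_change_basis:
  assumes "lin_indep2 u w" "\<alpha>*\<delta> - \<beta>*\<gamma> \<noteq> 0"
  shows "lin_indep2 (\<alpha> *s u + \<beta> *s w) (\<gamma> *s u + \<delta> *s (w::'a::field^4))"
  unfolding lin_indep2_def smult_add_smult_combine
proof (intro allI impI)
  fix a b assume "(a*\<alpha> + b*\<gamma>) *s u + (a*\<beta> + b*\<delta>) *s w = 0"
  then have "a*\<alpha> + b*\<gamma> = 0 \<and> a*\<beta> + b*\<delta> = 0" using assms(1) unfolding lin_indep2_def by blast
  then show "a = 0 \<and> b = 0"
    using det_nonzero_pair[of \<alpha> \<delta> \<gamma> \<beta> a b] assms(2) by (auto simp: algebra_simps)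
qed

lemma lin_indep2_nonzero: assumes "lin_indep2 u w" shows "w \<noteq> 0"
proof
  assume "w = 0"
  then have "0 *s u + 1 *s w = 0" by simp
  then show False using assms one_neq_zero unfolding lin_indep2_def by blast
qed

lemma line_through_smult_right: "k \<noteq> 0 \<Longrightarrow> line_through u (k *s w) = line_through u (w::'a::field^4)"
  using line_through_change_basis[of 1 k 0 0 u w] by simp

lemma line_through_rebase:
  assumes "lin_indep2 u w" "pt e \<in> line_through u w"
  obtains w' where "line_through u w = line_through e w'" "lin_indep2 e w'"
proof -
  obtain a b where "a \<noteq> 0 \<or> b \<noteq> 0" "pt e = pt (a *s u + b *s w)"
    using assms(2) unfolding line_through_def by blast
  moreover from this(2) obtain k where "k \<noteq> 0" "e = k *s (a *s u + b *s w)"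
    unfolding pt_eq_iff by blast
  ultimately have e: "e = (k*a) *s u + (k*b) *s w" and nz: "k*a \<noteq> 0 \<or> k*b \<noteq> 0"
    by (simp_all add: vector_add_ldistrib vector_smult_assoc)
  obtain \<gamma> \<delta> where det: "(k*a)*\<delta> - (k*b)*\<gamma> \<noteq> 0"
  proof (cases "k*a = 0")
    case True
    show ?thesis by (rule that[where \<gamma> = 1 and \<delta> = 0]) (use True nz in simp)
  next
    case False
    show ?thesis by (rule that[where \<gamma> = 0 and \<delta> = 1]) (use False in simp)
  qed
  show ?thesis
    using that[of "\<gamma> *s u + \<delta> *s w"] line_through_change_basis[OF det, of u w]
      lin_indep2_change_basis[OF assms(1) det] unfolding e by simp
qed

lemma lin_indep2_cubic_mat:
  assumes "a*d - b*c \<noteq> 0" "lin_indep2 u w"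
  shows "lin_indep2 (u v* cubic_mat a b c d) (w v* cubic_mat a b c d)"
  unfolding lin_indep2_def
proof (intro allI impI)
  fix x y assume "x *s (u v* cubic_mat a b c d) + y *s (w v* cubic_mat a b c d) = 0"
  then have "(x *s u + y *s w) v* cubic_mat a b c d = 0"
    by (simp add: vector_matrix_left_distrib scalar_vector_matrix_assoc)
  then have "(x *s u + y *s w) v* cubic_mat a b c d v* cubic_mat d (-b) (-c) a = 0"
    by simp
  then have "(a*d - b*c)^3 *s (x *s u + y *s w) = 0" by (simp only: vector_cubic_mat_adjugate)
  then have "x *s u + y *s w = 0" using assms(1) by (subst (asm) vector_mul_eq_0) simp
  then show "x = 0 \<and> y = 0" using assms(2) unfolding lin_indep2_def by blast
qed

lemma Gq_image_lines: assumes "g \<in> Gq" "l \<in> lines" shows "g ` l \<in> lines"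
proof -
  obtain a b c d where g: "a*d - b*c \<noteq> 0" "g = proj_map (cubic_mat a b c d)" using assms(1) by (rule GqE)
  obtain u w where l: "l = line_through u w" "lin_indep2 u w" using assms(2) unfolding lines_def by blast
  show ?thesis
    unfolding g l proj_map_image_line_through lines_def using lin_indep2_cubic_mat[OF g(1) l(2)] by blast
qed

section \<open>The cubic, its tangents and osculating planes\<close>

lemma cubic_vec_smult: "y \<noteq> 0 \<Longrightarrow> cubic_vec x y = y^3 *s cubic_vec (x/y) 1"
  by (simp add: cubic_vec_def vec4_eq_iff field_simps power2_eq_square power3_eq_cube)

lemma cubic_eq: "cubic = {pt (cubic_vec x y) | x y. x \<noteq> 0 \<or> y \<noteq> 0}" (is "_ = ?R")
proof (intro subset_antisym subsetI)
  fix P :: "'a pt" assume "P \<in> cubic"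
  then consider t where "P = Pt t" | "P = Pinf" unfolding cubic_def by blast
  then show "P \<in> ?R"
  proof cases
    case 1
    then show ?thesis unfolding Pt_def cubic_vec_def by (intro CollectI exI[of _ t] exI[of _ 1]) simp
  next
    case 2
    then show ?thesis unfolding Pinf_def cubic_vec_def by (intro CollectI exI[of _ 1] exI[of _ 0]) simp
  qed
next
  have on_cubic: "pt (cubic_vec x y) \<in> cubic" if "x \<noteq> 0 \<or> y \<noteq> 0" for x y :: 'a
  proof (cases "y = 0")
    case False
    have "pt (cubic_vec x y) = pt (y^3 *s cubic_vec (x/y) 1)" by (simp only: cubic_vec_smult[OF False])
    also have "\<dots> = pt (cubic_vec (x/y) 1)" using False by (intro pt_smult) simp
    also have "\<dots> = Pt (x/y)" by (simp add: Pt_def cubic_vec_def)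
    finally show ?thesis by (simp add: cubic_def)
  next
    case True
    have "x \<noteq> 0" using that True by simp
    have "pt (cubic_vec x y) = pt (x^3 *s vec4 1 0 0 0)" by (simp add: True cubic_vec_def)
    also have "\<dots> = Pinf" unfolding Pinf_def using \<open>x \<noteq> 0\<close> by (intro pt_smult) simp
    finally show ?thesis by (simp add: cubic_def)
  qed
  fix P :: "'a pt" assume "P \<in> ?R"
  then obtain x y where "x \<noteq> 0 \<or> y \<noteq> 0" "P = pt (cubic_vec x y)" by blast
  then show "P \<in> cubic" using on_cubic by simp
qed

lemma cubic_subset_points: "cubic \<subseteq> range pt"
  by (auto simp: cubic_def Pt_def Pinf_def)

lemma Gq_image_cubic: assumes "g \<in> Gq" shows "g ` cubic = cubic"
proof -
  have sub: "h ` cubic \<subseteq> cubic" if "h \<in> Gq" for h :: "'a pt \<Rightarrow> 'a pt"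
  proof -
    obtain a b c d where det: "a*d - b*c \<noteq> 0" and h: "h = proj_map (cubic_mat a b c d)"
      using \<open>h \<in> Gq\<close> by (rule GqE)
    show ?thesis
    proof
      fix Q assume "Q \<in> h ` cubic"
      then obtain x y where "x \<noteq> 0 \<or> y \<noteq> 0" "Q = h (pt (cubic_vec x y))" unfolding cubic_eq by blast
      then have "a*x + b*y \<noteq> 0 \<or> c*x + d*y \<noteq> 0" "Q = pt (cubic_vec (a*x+b*y) (c*x+d*y))"
        using det_nonzero_pair[OF det] by (simp_all add: h proj_map_pt cubic_vec_mult)
      then show "Q \<in> cubic" unfolding cubic_eq by blast
    qed
  qed
  obtain g' where g': "g' \<in> Gq" "g ` g' ` cubic = cubic"
    using Gq_image_inverse[OF assms cubic_subset_points] .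
  have "g ` g' ` cubic \<subseteq> g ` cubic" using sub[OF g'(1)] by (rule image_mono)
  then show ?thesis using sub[OF assms] unfolding g'(2) by (rule subset_antisym[rotated])
qed

lemma tangent_eq: "tangent t = line_through (cubic_vec t 1) (cubic_deriv_vec t 1 1 0)"
  by (simp add: tangent_def cubic_vec_def cubic_deriv_vec_def)

lemma tangent_inf_eq: "tangent_inf = line_through (cubic_vec 1 0) (cubic_deriv_vec 1 0 0 1)"
  by (simp add: tangent_inf_def cubic_vec_def cubic_deriv_vec_def)

(* Euler's identity x X_x + y X_y = 3 X for X = cubic_vec, written in the chart y = 1 *)
lemma cubic_deriv_vec_decomp:
  assumes "y \<noteq> 0"
  shows "cubic_deriv_vec x y p r
    = (3*r*y^2) *s cubic_vec (x/y) 1 + (y^2*(p - (x/y)*r)) *s cubic_deriv_vec (x/y) 1 1 0"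
  using assms
  by (simp add: cubic_deriv_vec_def cubic_vec_def vec4_eq_iff field_simps power2_eq_square power3_eq_cube)

lemma line_through_cubic_deriv_in_tangents:
  assumes det: "x*r - y*p \<noteq> 0"
  shows "line_through (cubic_vec x y) (cubic_deriv_vec x y p r) \<in> tangents"
proof (cases "y = 0")
  case False
  define t where "t = x/y"
  have X: "cubic_vec x y = y^3 *s cubic_vec t 1 + 0 *s cubic_deriv_vec t 1 1 0"
    unfolding t_def using cubic_vec_smult[OF False] by simp
  have T: "cubic_deriv_vec x y p r = (3*r*y^2) *s cubic_vec t 1 + (y^2*(p - t*r)) *s cubic_deriv_vec t 1 1 0"
    unfolding t_def by (rule cubic_deriv_vec_decomp[OF False])
  have "y*p - x*r \<noteq> 0" using det by (simp add: algebra_simps)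
  then have "p - t*r \<noteq> 0" unfolding t_def using False by (simp add: field_simps)
  then have "y^3 * (y^2*(p - t*r)) - 0 * (3*r*y^2) \<noteq> 0" using False by simp
  then have "line_through (cubic_vec x y) (cubic_deriv_vec x y p r) = tangent t"
    unfolding X T tangent_eq by (rule line_through_change_basis)
  then show ?thesis unfolding tangents_def by simp
next
  case True
  then have "x \<noteq> 0" "r \<noteq> 0" using det by auto
  have X: "cubic_vec x y = x^3 *s cubic_vec 1 0 + 0 *s cubic_deriv_vec 1 0 0 1"
    using True by (simp add: cubic_vec_def)
  have T: "cubic_deriv_vec x y p r = (3*x^2*p) *s cubic_vec 1 0 + (x^2*r) *s cubic_deriv_vec 1 0 0 1"
    using True by (simp add: cubic_vec_def cubic_deriv_vec_def)
  have "x^3 * (x^2*r) - 0 * (3*x^2*p) \<noteq> 0" using \<open>x \<noteq> 0\<close> \<open>r \<noteq> 0\<close> by simp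
  then have "line_through (cubic_vec x y) (cubic_deriv_vec x y p r) = tangent_inf"
    unfolding X T tangent_inf_eq by (rule line_through_change_basis)
  then show ?thesis unfolding tangents_def by simp
qed

lemma tangents_eq:
  "tangents = {line_through (cubic_vec x y) (cubic_deriv_vec x y p r) | x y p r. x*r - y*p \<noteq> 0}"
  (is "_ = ?T")
proof (intro subset_antisym subsetI)
  fix l :: "'a pt set" assume "l \<in> tangents"
  then consider t where "l = tangent t" | "l = tangent_inf" unfolding tangents_def by blast
  then show "l \<in> ?T"
  proof cases
    case 1
    then show ?thesis unfolding tangent_eq
      by (intro CollectI exI[of _ t] exI[of _ 1] exI[of _ 1] exI[of _ 0]) simp
  next
    case 2
    then show ?thesis unfolding tangent_inf_eq
      by (intro CollectI exI[of _ 1] exI[of _ 0] exI[of _ 0] exI[of _ 1]) simp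
  qed
next
  fix l :: "'a pt set" assume "l \<in> ?T"
  then obtain x y p r where "l = line_through (cubic_vec x y) (cubic_deriv_vec x y p r)" "x*r - y*p \<noteq> 0"
    by blast
  then show "l \<in> tangents" using line_through_cubic_deriv_in_tangents by simp
qed

lemma Gq_image_tangents: assumes "g \<in> Gq" "l \<in> tangents" shows "g ` l \<in> tangents"
proof -
  obtain a b c d where g: "a*d - b*c \<noteq> 0" "g = proj_map (cubic_mat a b c d)" using assms(1) by (rule GqE)
  obtain x y p r where l: "l = line_through (cubic_vec x y) (cubic_deriv_vec x y p r)" "x*r - y*p \<noteq> 0"
    using assms(2) unfolding tangents_eq by blast
  have "(a*x+b*y)*(c*p+d*r) - (c*x+d*y)*(a*p+b*r) = (a*d-b*c)*(x*r-y*p)" by (simp add: algebra_simps)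
  then have "(a*x+b*y)*(c*p+d*r) - (c*x+d*y)*(a*p+b*r) \<noteq> 0" using g l by simp
  then show ?thesis
    unfolding g l proj_map_image_line_through cubic_vec_mult cubic_deriv_vec_mult tangents_eq by blast
qed

definition dot :: "'a::field vec4 \<Rightarrow> 'a vec4 \<Rightarrow> 'a" where
  "dot c v = (\<Sum>i\<in>UNIV. c$i * v$i)"

lemma plane_eq: "plane c = {pt v | v. v \<noteq> 0 \<and> dot c v = 0}"
  unfolding plane_def dot_def ..

lemma dot_smult: "dot (k *s c) v = k * dot c v" "dot c (k *s v) = k * dot c v"
  unfolding dot_def by (simp_all add: sum_distrib_left algebra_simps)

lemma dot_vector_matrix_mult: "dot c (v v* M) = dot (M *v c) v"
  unfolding dot_def vector_matrix_mult_def matrix_vector_mult_def by (simp add: sum_UNIV_4 algebra_simps)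

lemma plane_smult: "k \<noteq> 0 \<Longrightarrow> plane (k *s c) = plane c"
  unfolding plane_eq dot_smult by simp

(* Plane coordinates transform contragrediently to point coordinates. *)
lemma proj_map_image_plane:
  assumes "M *v c' = k *s c" "k \<noteq> 0" "l \<noteq> 0"
    and "\<And>v. v v* M v* M' = l *s v" "\<And>v. v v* M' v* M = l *s v"
  shows "proj_map M ` plane c = plane c'"
proof (intro subset_antisym subsetI)
  fix Q assume "Q \<in> proj_map M ` plane c"
  then obtain v where v: "Q = pt (v v* M)" "v \<noteq> 0" "dot c v = 0"
    unfolding plane_eq by (auto simp: proj_map_pt)
  have "v v* M \<noteq> 0"
  proof
    assume "v v* M = 0"
    then have "l *s v = 0" using assms(4)[of v] by simp
    with v(2) assms(3) show False by simp
  qed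
  moreover have "dot c' (v v* M) = 0" unfolding dot_vector_matrix_mult assms(1) dot_smult v(3) by simp
  ultimately show "Q \<in> plane c'" unfolding plane_eq v(1) by blast
next
  fix Q assume "Q \<in> plane c'"
  then obtain w where w: "Q = pt w" "w \<noteq> 0" "dot c' w = 0" unfolding plane_eq by blast
  define v where "v = w v* M'"
  have vM: "v v* M = l *s w" unfolding v_def by (rule assms(5))
  have "v \<noteq> 0" using vM w(2) assms(3) by auto
  moreover have "k * dot c v = 0"
    using w(3) unfolding dot_smult(1)[symmetric] assms(1)[symmetric] dot_vector_matrix_mult[symmetric] vM
    by (simp add: dot_smult)
  then have "dot c v = 0" using assms(2) by simp
  moreover have "Q = proj_map M (pt v)" unfolding proj_map_pt vM w(1) using assms(3) by (simp add: pt_smult)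
  ultimately show "Q \<in> proj_map M ` plane c" unfolding plane_eq by blast
qed

lemma osc_vec_smult: "y \<noteq> 0 \<Longrightarrow> osc_vec x y = y^3 *s osc_vec (x/y) 1"
  by (simp add: osc_vec_def vec4_eq_iff field_simps power2_eq_square power3_eq_cube)

lemma osc_plane_eq: "osc_plane t = plane (osc_vec t 1)"
  by (simp add: osc_plane_def osc_vec_def)

lemma osc_plane_inf_eq: "osc_plane_inf = plane (osc_vec 1 0)"
proof -
  have "plane (osc_vec 1 (0::'a)) = plane ((-1) *s vec4 0 0 0 1)" by (simp add: osc_vec_def)
  also have "\<dots> = osc_plane_inf" unfolding osc_plane_inf_def by (rule plane_smult) simp
  finally show ?thesis ..
qed

lemma osc_planes_eq: "osc_planes = {plane (osc_vec x y) | x y. x \<noteq> 0 \<or> y \<noteq> 0}" (is "_ = ?O")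
proof (intro subset_antisym subsetI)
  fix \<pi> :: "'a pt set" assume "\<pi> \<in> osc_planes"
  then consider t where "\<pi> = osc_plane t" | "\<pi> = osc_plane_inf" unfolding osc_planes_def by blast
  then show "\<pi> \<in> ?O"
  proof cases
    case 1
    then show ?thesis unfolding osc_plane_eq by (intro CollectI exI[of _ t] exI[of _ 1]) simp
  next
    case 2
    then show ?thesis unfolding osc_plane_inf_eq by (intro CollectI exI[of _ 1] exI[of _ 0]) simp
  qed
next
  fix \<pi> :: "'a pt set" assume "\<pi> \<in> ?O"
  then obtain x y where \<pi>: "\<pi> = plane (osc_vec x y)" "x \<noteq> 0 \<or> y \<noteq> 0" by blast
  show "\<pi> \<in> osc_planes"
  proof (cases "y = 0")
    case False
    have "\<pi> = plane (y^3 *s osc_vec (x/y) 1)" unfolding \<pi>(1) by (simp only: osc_vec_smult[OF False])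
    also have "\<dots> = osc_plane (x/y)" using False by (simp add: plane_smult osc_plane_eq)
    finally show ?thesis unfolding osc_planes_def by simp
  next
    case True
    then have "x \<noteq> 0" using \<pi>(2) by simp
    have "\<pi> = plane (x^3 *s osc_vec 1 0)" unfolding \<pi>(1) True by (simp add: osc_vec_def)
    also have "\<dots> = osc_plane_inf" using \<open>x \<noteq> 0\<close> by (simp add: plane_smult osc_plane_inf_eq)
    finally show ?thesis unfolding osc_planes_def by simp
  qed
qed

lemma proj_map_cubic_mat_image_osc_plane:
  assumes "a*d - b*c \<noteq> 0"
  shows "proj_map (cubic_mat a b c d) ` plane (osc_vec x y) = plane (osc_vec (a*x+b*y) (c*x+d*y))"
  by (rule proj_map_image_plane[OF cubic_mat_osc_vec _ _ vector_cubic_mat_adjugate]) (use assms in simp_all)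

lemma Gq_image_osc_planes: assumes "g \<in> Gq" "\<pi> \<in> osc_planes" shows "g ` \<pi> \<in> osc_planes"
proof -
  obtain a b c d where g: "a*d - b*c \<noteq> 0" "g = proj_map (cubic_mat a b c d)" using assms(1) by (rule GqE)
  obtain x y where \<pi>: "\<pi> = plane (osc_vec x y)" "x \<noteq> 0 \<or> y \<noteq> 0" using assms(2) unfolding osc_planes_eq by blast
  show ?thesis
    unfolding g \<pi> proj_map_cubic_mat_image_osc_plane[OF g(1)] osc_planes_eq
    using det_nonzero_pair[OF g(1) \<pi>(2)] by blast
qed

section \<open>U-Gamma lines\<close>

lemma Gq_image_UGamma_lines: assumes "g \<in> Gq" "l \<in> UGamma_lines" shows "g ` l \<in> UGamma_lines"
proof -
  from assms(2) have l: "l \<in> lines" "card (l \<inter> cubic) = 1" "l \<notin> tangents" "\<exists>\<pi>\<in>osc_planes. l \<subseteq> \<pi>"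
    unfolding UGamma_lines_def by auto
  have "l \<union> cubic \<subseteq> range pt" using lines_subset_points[OF l(1)] cubic_subset_points by simp
  then have inj: "inj_on g (l \<union> cubic)" by (rule inj_on_subset[OF Gq_inj_on_points[OF assms(1)]])
  have "g ` l \<inter> cubic = g ` (l \<inter> cubic)"
    using inj_on_image_Int[OF inj, of l cubic] Gq_image_cubic[OF assms(1)] by simp
  moreover have "card (g ` (l \<inter> cubic)) = card (l \<inter> cubic)"
    by (rule card_image[OF inj_on_subset[OF inj]]) blast
  ultimately have "card (g ` l \<inter> cubic) = 1" using l(2) by simp
  moreover have "g ` l \<notin> tangents"
  proof
    assume "g ` l \<in> tangents"
    obtain g' where g': "g' \<in> Gq" "g' ` g ` l = l" "g ` g' ` l = l"
      using Gq_image_inverse[OF assms(1) lines_subset_points[OF l(1)]] .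
    have "g' ` g ` l \<in> tangents" by (rule Gq_image_tangents[OF g'(1) \<open>g ` l \<in> tangents\<close>])
    then show False using g'(2) l(3) by simp
  qed
  moreover have "\<exists>\<pi>\<in>osc_planes. g ` l \<subseteq> \<pi>"
  proof -
    obtain \<pi> where "\<pi> \<in> osc_planes" "l \<subseteq> \<pi>" using l(4) by blast
    then have "g ` \<pi> \<in> osc_planes" "g ` l \<subseteq> g ` \<pi>" by (simp_all add: Gq_image_osc_planes[OF assms(1)] image_mono)
    then show ?thesis by blast
  qed
  ultimately show ?thesis
    using Gq_image_lines[OF assms(1) l(1)] by (simp add: UGamma_lines_def)
qed

abbreviation UGamma_line0 :: "'a::field pt set" where
  "UGamma_line0 \<equiv> line_through (vec4 0 0 0 1) (vec4 0 1 0 0)"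

lemma Pt_0: "Pt 0 = pt (vec4 0 0 0 1)"
  by (simp add: Pt_def)

lemma osc_plane_0_eq: "osc_plane 0 = plane (vec4 1 0 0 0)"
  by (simp add: osc_plane_def)

lemma mem_osc_plane_0_iff: "pt v \<in> osc_plane 0 \<longleftrightarrow> v \<noteq> 0 \<and> v$0 = 0"
proof
  assume "pt v \<in> osc_plane 0"
  then obtain w where "pt v = pt w" "w \<noteq> 0" "w$0 = 0"
    unfolding osc_plane_0_eq plane_eq by (auto simp: dot_def sum_UNIV_4)
  then show "v \<noteq> 0 \<and> v$0 = 0" unfolding pt_eq_iff by auto
next
  assume "v \<noteq> 0 \<and> v$0 = 0"
  then show "pt v \<in> osc_plane 0" unfolding osc_plane_0_eq plane_eq by (auto simp: dot_def sum_UNIV_4)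
qed

lemma osc_plane_0_inter_cubic: "osc_plane 0 \<inter> cubic = {Pt 0}"
proof (intro subset_antisym subsetI)
  fix P :: "'a pt" assume P: "P \<in> osc_plane 0 \<inter> cubic"
  then consider t where "P = Pt t" | "P = Pinf" unfolding cubic_def by blast
  then show "P \<in> {Pt 0}"
  proof cases
    case 1
    then have "t = 0" using P by (simp add: Pt_def mem_osc_plane_0_iff)
    then show ?thesis using 1 by simp
  next
    case 2
    then show ?thesis using P by (simp add: Pinf_def mem_osc_plane_0_iff)
  qed
next
  fix P :: "'a pt" assume "P \<in> {Pt 0}"
  moreover have "Pt (0::'a) \<in> cubic" unfolding cubic_def by simp
  moreover have "Pt (0::'a) \<in> osc_plane 0" unfolding Pt_0 by (simp add: mem_osc_plane_0_iff)
  ultimately show "P \<in> osc_plane 0 \<inter> cubic" by simp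
qed

lemma mem_UGamma_line0D: "pt v \<in> UGamma_line0 \<Longrightarrow> v$0 = 0 \<and> v$2 = 0"
proof -
  assume "pt v \<in> UGamma_line0"
  then obtain a b where "pt v = pt (a *s vec4 0 0 0 1 + b *s vec4 0 1 0 0)"
    unfolding line_through_def by blast
  then obtain k where "v = k *s (a *s vec4 0 0 0 1 + b *s vec4 0 1 0 0)" unfolding pt_eq_iff by blast
  then show ?thesis by simp
qed

lemma UGamma_line0_subset_osc_plane_0: "(UGamma_line0 :: 'a::field pt set) \<subseteq> osc_plane 0"
proof
  fix P :: "'a pt" assume "P \<in> UGamma_line0"
  then obtain a b :: 'a where "P = pt (a *s vec4 0 0 0 1 + b *s vec4 0 1 0 0)" "a \<noteq> 0 \<or> b \<noteq> 0"
    unfolding line_through_def by blast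
  then show "P \<in> osc_plane 0" by (auto simp: mem_osc_plane_0_iff)
qed

lemma UGamma_line0_inter_cubic: "(UGamma_line0 :: 'a::field pt set) \<inter> cubic = {Pt 0}"
proof -
  have "(UGamma_line0 :: 'a pt set) \<inter> cubic \<subseteq> osc_plane 0 \<inter> cubic"
    using UGamma_line0_subset_osc_plane_0 by blast
  moreover have "Pt 0 \<in> (UGamma_line0 :: 'a pt set) \<inter> cubic"
    using pt_in_line_through(1) osc_plane_0_inter_cubic unfolding Pt_0 by blast
  ultimately show ?thesis unfolding osc_plane_0_inter_cubic by blast
qed

lemma UGamma_line0_not_tangent: "(UGamma_line0 :: 'a::field pt set) \<notin> tangents"
proof
  assume "(UGamma_line0 :: 'a pt set) \<in> tangents"
  then have "(UGamma_line0 :: 'a pt set) \<in> range tangent \<union> {tangent_inf}" unfolding tangents_def .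
  then show False
  proof (elim UnE rangeE singletonE)
    fix t :: 'a assume "UGamma_line0 = tangent t"
    moreover have "pt (vec4 (3*t^2) (2*t) 1 0) \<in> tangent t" unfolding tangent_def by (rule pt_in_line_through)
    ultimately have "pt (vec4 (3*t^2) (2*t) 1 0) \<in> UGamma_line0" by simp
    then show False using mem_UGamma_line0D by force
  next
    assume "UGamma_line0 = (tangent_inf :: 'a pt set)"
    moreover have "pt (vec4 1 0 0 0) \<in> (tangent_inf :: 'a pt set)" unfolding tangent_inf_def by (rule pt_in_line_through)
    ultimately have "pt (vec4 1 0 0 (0::'a)) \<in> UGamma_line0" by simp
    then show False using mem_UGamma_line0D by force
  qed
qed

lemma UGamma_line0_in_UGamma_lines: "(UGamma_line0 :: 'a::field pt set) \<in> UGamma_lines"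
  unfolding UGamma_lines_def
proof (intro CollectI conjI)
  have "lin_indep2 (vec4 0 0 0 1) (vec4 0 1 0 (0::'a))" unfolding lin_indep2_def by simp
  then show "(UGamma_line0 :: 'a pt set) \<in> lines" unfolding lines_def by blast
  show "card ((UGamma_line0 :: 'a pt set) \<inter> cubic) = 1" by (simp add: UGamma_line0_inter_cubic)
  show "(UGamma_line0 :: 'a pt set) \<notin> tangents" by (rule UGamma_line0_not_tangent)
  show "\<exists>\<pi>\<in>osc_planes. (UGamma_line0 :: 'a pt set) \<subseteq> \<pi>"
    using UGamma_line0_subset_osc_plane_0 unfolding osc_planes_def by blast
qed

lemma Gq_osc_plane_to_osc_plane_0:
  assumes "\<pi> \<in> osc_planes"
  obtains g where "g \<in> Gq" "g ` \<pi> = osc_plane 0"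
proof -
  obtain x y where \<pi>: "\<pi> = plane (osc_vec x y)" "x \<noteq> 0 \<or> y \<noteq> 0"
    using assms unfolding osc_planes_eq by blast
  obtain c d where cd: "c*x + d*y = 1"
  proof (cases "y = 0")
    case True
    then show ?thesis using \<pi>(2) by (intro that[of "1/x" 0]) simp
  next
    case False
    then show ?thesis by (intro that[of 0 "1/y"]) simp
  qed
  have det: "y*d - (-x)*c \<noteq> 0" using cd by (simp add: algebra_simps)
  have "proj_map (cubic_mat y (-x) c d) ` \<pi> = plane (osc_vec (y*x + (-x)*y) (c*x + d*y))"
    unfolding \<pi>(1) by (rule proj_map_cubic_mat_image_osc_plane[OF det])
  also have "\<dots> = osc_plane 0" by (simp add: cd osc_plane_eq mult.commute)
  finally show ?thesis using GqI[OF det] by (rule that[rotated])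
qed

lemma lines_through_Pt_0_in_osc_plane_0:
  assumes "l \<in> lines" "Pt 0 \<in> l" "l \<subseteq> osc_plane 0"
  shows "l = tangent 0 \<or> (\<exists>e. l = line_through (vec4 0 0 0 1) (vec4 0 1 e (0::'a::field)))"
proof -
  let ?e3 = "vec4 0 0 0 (1::'a)"
  obtain u w where uw: "l = line_through u w" "lin_indep2 u w" using assms(1) unfolding lines_def by blast
  have "pt ?e3 \<in> line_through u w" using assms(2) unfolding uw(1) Pt_0 .
  then obtain w' where "line_through u w = line_through ?e3 w'" and indep: "lin_indep2 ?e3 w'"
    by (rule line_through_rebase[OF uw(2)])
  then have lw': "l = line_through ?e3 w'" using uw(1) by simp
  have "pt w' \<in> l" unfolding lw' by (rule pt_in_line_through)
  then have "w'$0 = 0" using assms(3) by (auto simp: mem_osc_plane_0_iff)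
  define p q s where "p = w'$1" and "q = w'$2" and "s = w'$3"
  have w': "w' = vec4 0 p q s"
    using \<open>w'$0 = 0\<close> vec4_collapse[of w'] by (simp add: p_def q_def s_def)
  have "1 *s ?e3 + 0 *s w' = ?e3" "(-s) *s ?e3 + 1 *s w' = vec4 0 p q 0"
    unfolding w' by simp_all
  then have l: "l = line_through ?e3 (vec4 0 p q 0)" and indep': "lin_indep2 ?e3 (vec4 0 p q 0)"
    using line_through_change_basis[of 1 1 0 "-s" ?e3 w'] lin_indep2_change_basis[OF indep, of 1 1 0 "-s"]
    unfolding lw' by simp_all
  have "p \<noteq> 0 \<or> q \<noteq> 0" using lin_indep2_nonzero[OF indep'] by simp
  show ?thesis
  proof (cases "p = 0")
    case True
    have "l = line_through ?e3 (q *s vec4 0 0 1 0)" unfolding l True by simp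
    also have "\<dots> = tangent 0" using True \<open>p \<noteq> 0 \<or> q \<noteq> 0\<close>
      by (subst line_through_smult_right) (simp_all add: tangent_def)
    finally show ?thesis ..
  next
    case False
    have "l = line_through ?e3 (p *s vec4 0 1 (q/p) 0)" unfolding l using False by simp
    also have "\<dots> = line_through ?e3 (vec4 0 1 (q/p) 0)" using False by (rule line_through_smult_right)
    finally show ?thesis by blast
  qed
qed

lemma proj_map_shear_image_UGamma_line0:
  assumes "(2::'a::field) \<noteq> 0"
  shows "proj_map (cubic_mat 1 0 (e/2) 1) ` UGamma_line0 = line_through (vec4 0 0 0 1) (vec4 0 1 e (0::'a))"
proof -
  let ?e3 = "vec4 0 0 0 (1::'a)" and ?s = "3*(e/2)^2"
  have "proj_map (cubic_mat 1 0 (e/2) 1) ` UGamma_line0 = line_through ?e3 (vec4 0 1 e ?s)"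
    unfolding proj_map_image_line_through using assms by (simp add: cubic_mat_def)
  also have "\<dots> = line_through ?e3 (vec4 0 1 e 0)"
    using line_through_change_basis[of 1 1 0 "-?s" ?e3 "vec4 0 1 e ?s"] by simp
  finally show ?thesis .
qed

lemma UGamma_line_in_osc_plane_0_orbit:
  assumes "(2::'a::field) \<noteq> 0" "l \<in> UGamma_lines" "l \<subseteq> osc_plane 0"
  obtains h where "h \<in> Gq" "h ` UGamma_line0 = (l :: 'a pt set)"
proof -
  from assms(2) have l: "l \<in> lines" "card (l \<inter> cubic) = 1" "l \<notin> tangents"
    unfolding UGamma_lines_def by auto
  obtain Q where Q: "l \<inter> cubic = {Q}" using l(2) by (rule card_1_singletonE)
  then have "Q \<in> osc_plane 0 \<inter> cubic" using assms(3) by blast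
  then have "Pt 0 \<in> l" using Q unfolding osc_plane_0_inter_cubic by blast
  moreover have "l \<noteq> tangent 0" using l(3) unfolding tangents_def by blast
  ultimately obtain e where e: "l = line_through (vec4 0 0 0 1) (vec4 0 1 e 0)"
    using lines_through_Pt_0_in_osc_plane_0[OF l(1) _ assms(3)] by blast
  have "proj_map (cubic_mat 1 0 (e/2) 1) \<in> Gq" by (rule GqI) simp
  then show ?thesis using that proj_map_shear_image_UGamma_line0[OF assms(1), of e] e by simp
qed

lemma UGamma_line_orbit:
  assumes "(2::'a::field) \<noteq> 0" "l \<in> UGamma_lines"
  obtains h where "h \<in> Gq" "h ` UGamma_line0 = (l :: 'a pt set)"
proof -
  obtain \<pi> where \<pi>: "\<pi> \<in> osc_planes" "l \<subseteq> \<pi>" and "l \<in> lines"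
    using assms(2) unfolding UGamma_lines_def by blast
  obtain g where g: "g \<in> Gq" "g ` \<pi> = osc_plane 0" using \<pi>(1) by (rule Gq_osc_plane_to_osc_plane_0)
  have "g ` l \<subseteq> osc_plane 0" using image_mono[OF \<pi>(2), of g] unfolding g(2) .
  then obtain h where h: "h \<in> Gq" "h ` UGamma_line0 = g ` l"
    using UGamma_line_in_osc_plane_0_orbit[OF assms(1) Gq_image_UGamma_lines[OF g(1) assms(2)]] by blast
  obtain g' where g': "g' \<in> Gq" "g' ` g ` l = l" "g ` g' ` l = l"
    using Gq_image_inverse[OF g(1) lines_subset_points[OF \<open>l \<in> lines\<close>]] .
  have "(g' \<circ> h) ` UGamma_line0 = g' ` h ` UGamma_line0" by (rule image_comp[symmetric])
  also have "\<dots> = l" by (simp only: h(2) g'(2))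
  finally show ?thesis by (rule that[OF Gq_comp[OF g'(1) h(1)]])
qed

lemma UGamma_lines_transitive:
  assumes "(2::'a::field) \<noteq> 0" "l1 \<in> UGamma_lines" "l2 \<in> (UGamma_lines :: 'a pt set set)"
  shows "\<exists>g\<in>Gq. g ` l1 = l2"
proof -
  obtain h1 where h1: "h1 \<in> Gq" "h1 ` UGamma_line0 = l1" using assms(1,2) by (rule UGamma_line_orbit)
  obtain h2 where h2: "h2 \<in> Gq" "h2 ` UGamma_line0 = l2" using assms(1,3) by (rule UGamma_line_orbit)
  obtain h1' where h1': "h1' \<in> Gq" "h1' ` h1 ` UGamma_line0 = UGamma_line0" "h1 ` h1' ` UGamma_line0 = UGamma_line0"
    using Gq_image_inverse[OF h1(1) line_through_subset_points] .
  have "(h2 \<circ> h1') ` l1 = h2 ` h1' ` h1 ` UGamma_line0" unfolding h1(2)[symmetric] by (rule image_comp[symmetric])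
  also have "\<dots> = l2" by (simp only: h1'(2) h2(2))
  finally show ?thesis using Gq_comp[OF h2(1) h1'(1)] by blast
qed

section \<open>Stabilisers\<close>

lemma stabilizer_iff: "g \<in> stabilizer l \<longleftrightarrow> g \<in> Gq \<and> g ` l = l"
  by (simp add: stabilizer_def act_line_def)

lemma diagonal_in_stabilizer_UGamma_line0:
  assumes "d \<noteq> 0"
  shows "proj_map (cubic_mat 1 0 0 d) \<in> stabilizer (UGamma_line0 :: 'a::field pt set)"
  unfolding stabilizer_iff
proof
  show "proj_map (cubic_mat 1 0 0 d) \<in> Gq" using assms by (intro GqI) simp
  have "proj_map (cubic_mat 1 0 0 d) ` UGamma_line0 = line_through
      (d^3 *s vec4 0 0 0 1 + 0 *s vec4 0 1 0 0) (0 *s vec4 0 0 0 1 + d *s vec4 0 1 0 (0::'a))"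
    unfolding proj_map_image_line_through by (simp add: cubic_mat_def)
  also have "\<dots> = UGamma_line0" by (rule line_through_change_basis) (use assms in simp)
  finally show "proj_map (cubic_mat 1 0 0 d) ` UGamma_line0 = (UGamma_line0 :: 'a pt set)" .
qed

lemma stabilizer_UGamma_line0:
  assumes "(2::'a::field) \<noteq> 0"
  shows "stabilizer (UGamma_line0 :: 'a pt set) = (\<lambda>d. proj_map (cubic_mat 1 0 0 d)) ` {d. d \<noteq> 0}"
proof (intro subset_antisym subsetI)
  fix g assume "g \<in> stabilizer (UGamma_line0 :: 'a pt set)"
  then have "g \<in> Gq" and gl: "g ` UGamma_line0 = UGamma_line0" unfolding stabilizer_iff by simp_all
  obtain a b c d where det: "a*d - b*c \<noteq> 0" and g: "g = proj_map (cubic_mat a b c d)"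
    using \<open>g \<in> Gq\<close> by (rule GqE)
  have maps_into: "g (pt v) \<in> UGamma_line0" if "pt v \<in> UGamma_line0" for v :: "'a vec4"
    using that gl by blast
  have "pt (vec4 (b^3) (b^2*d) (b*d^2) (d^3)) \<in> UGamma_line0"
    using maps_into[OF pt_in_line_through(1)] by (simp add: g proj_map_pt cubic_mat_def)
  then have "b = 0" using mem_UGamma_line0D by fastforce
  have "pt (vec4 0 (a^2*d) (2*a*c*d) (3*c^2*d)) \<in> UGamma_line0"
    using maps_into[OF pt_in_line_through(2)] by (simp add: g proj_map_pt cubic_mat_def \<open>b = 0\<close>)
  then have "2*a*c*d = 0" using mem_UGamma_line0D by fastforce
  moreover have "a \<noteq> 0" "d \<noteq> 0" using det \<open>b = 0\<close> by auto
  ultimately have "c = 0" using assms by simp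
  have "g = proj_map (cubic_mat (a*1) (a*0) (a*0) (a*(d/a)))"
    using \<open>a \<noteq> 0\<close> by (simp add: g \<open>b = 0\<close> \<open>c = 0\<close>)
  also have "\<dots> = proj_map (cubic_mat 1 0 0 (d/a))" using \<open>a \<noteq> 0\<close> by (rule proj_map_cubic_mat_smult)
  finally show "g \<in> (\<lambda>d. proj_map (cubic_mat 1 0 0 d)) ` {d. d \<noteq> 0}"
    using \<open>a \<noteq> 0\<close> \<open>d \<noteq> 0\<close> by simp
next
  fix g assume "g \<in> (\<lambda>d. proj_map (cubic_mat 1 0 0 d)) ` {d::'a. d \<noteq> 0}"
  then obtain d where "d \<noteq> 0" "g = proj_map (cubic_mat 1 0 0 d)" by blast
  then show "g \<in> stabilizer UGamma_line0" using diagonal_in_stabilizer_UGamma_line0 by simp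
qed

lemma inj_proj_map_diagonal: "inj (\<lambda>d::'a::field. proj_map (cubic_mat 1 0 0 d))"
proof (rule injI)
  fix d d' :: 'a
  assume "proj_map (cubic_mat 1 0 0 d) = proj_map (cubic_mat 1 0 0 d')"
  then have "proj_map (cubic_mat 1 0 0 d) (pt (vec4 1 1 0 0)) = proj_map (cubic_mat 1 0 0 d') (pt (vec4 1 1 0 0))"
    by simp
  then have "pt (vec4 1 d 0 0) = pt (vec4 1 d' 0 0)" by (simp add: proj_map_pt cubic_mat_def)
  then show "d = d'" unfolding pt_eq_iff by (auto simp: vec4_eq_iff)
qed

lemma card_stabilizer_UGamma_line0:
  assumes "(2::'a::{field,finite}) \<noteq> 0"
  shows "card (stabilizer (UGamma_line0 :: 'a pt set)) = CARD('a) - 1"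
proof -
  have "card (stabilizer (UGamma_line0 :: 'a pt set)) = card {d::'a. d \<noteq> 0}"
    unfolding stabilizer_UGamma_line0[OF assms]
    by (rule card_image[OF inj_on_subset[OF inj_proj_map_diagonal]]) simp
  also have "{d::'a. d \<noteq> 0} = UNIV - {0}" by blast
  also have "card \<dots> = CARD('a) - 1" by (simp add: card_Diff_singleton)
  finally show ?thesis .
qed

lemma Gq_conjugate_cancel:
  assumes "g \<in> Gq" "k' \<circ> k = proj_map (mat 1)"
  shows "k' \<circ> (k \<circ> g \<circ> k') \<circ> k = g"
proof -
  have "k' \<circ> (k \<circ> g \<circ> k') \<circ> k = (k' \<circ> k) \<circ> g \<circ> (k' \<circ> k)" by (simp add: comp_assoc)
  also have "\<dots> = g" unfolding assms(2) using Gq_comp_proj_map_mat1[OF assms(1)] by simp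
  finally show ?thesis .
qed

lemma conjugate_in_stabilizer:
  assumes "h \<in> Gq" "h' \<in> Gq" "h' ` h ` l = l" "g \<in> stabilizer l"
  shows "h \<circ> g \<circ> h' \<in> stabilizer (h ` l)"
  unfolding stabilizer_iff
proof
  have "g \<in> Gq" "g ` l = l" using assms(4) unfolding stabilizer_iff by simp_all
  then show "h \<circ> g \<circ> h' \<in> Gq" using assms(1,2) by (intro Gq_comp)
  have "(h \<circ> g \<circ> h') ` h ` l = h ` g ` h' ` h ` l" by (simp only: image_comp comp_assoc)
  also have "\<dots> = h ` l" by (simp only: assms(3) \<open>g ` l = l\<close>)
  finally show "(h \<circ> g \<circ> h') ` h ` l = h ` l" .
qed

lemma card_stabilizer_image:
  assumes "h \<in> Gq" "l \<subseteq> range pt"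
  shows "card (stabilizer (h ` l)) = card (stabilizer l)"
proof -
  obtain h' where h': "h' \<in> Gq" "h' \<circ> h = proj_map (mat 1)" "h \<circ> h' = proj_map (mat 1)"
    using assms(1) by (rule Gq_inverse)
  have cancel: "h' ` h ` l = l" by (simp only: image_comp h'(2) proj_map_mat1_image[OF assms(2)])
  have cancel': "h ` h' ` h ` l = h ` l" by (simp only: cancel)
  have "bij_betw (\<lambda>g. h \<circ> g \<circ> h') (stabilizer l) (stabilizer (h ` l))"
  proof (rule bij_betw_byWitness[where f' = "\<lambda>g. h' \<circ> g \<circ> h"])
    show "\<forall>g\<in>stabilizer l. h' \<circ> (h \<circ> g \<circ> h') \<circ> h = g"
      by (intro ballI Gq_conjugate_cancel[OF _ h'(2)]) (simp add: stabilizer_iff)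
    show "\<forall>g\<in>stabilizer (h ` l). h \<circ> (h' \<circ> g \<circ> h) \<circ> h' = g"
      by (intro ballI Gq_conjugate_cancel[OF _ h'(3)]) (simp add: stabilizer_iff)
    show "(\<lambda>g. h \<circ> g \<circ> h') ` stabilizer l \<subseteq> stabilizer (h ` l)"
      using conjugate_in_stabilizer[OF assms(1) h'(1) cancel] by blast
    show "(\<lambda>g. h' \<circ> g \<circ> h) ` stabilizer (h ` l) \<subseteq> stabilizer l"
      using conjugate_in_stabilizer[OF h'(1) assms(1) cancel'] unfolding cancel by blast
  qed
  then show ?thesis by (rule bij_betw_same_card[symmetric])
qed

lemma card_stabilizer_UGamma_line:
  assumes "(2::'a::{field,finite}) \<noteq> 0" "l \<in> (UGamma_lines :: 'a pt set set)"
  shows "card (stabilizer l) = CARD('a) - 1"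
proof -
  obtain h where h: "h \<in> Gq" "h ` UGamma_line0 = l" using assms by (rule UGamma_line_orbit)
  have "card (stabilizer l) = card (stabilizer (UGamma_line0 :: 'a pt set))"
    unfolding h(2)[symmetric] by (rule card_stabilizer_image[OF h(1) line_through_subset_points])
  then show ?thesis using card_stabilizer_UGamma_line0[OF assms(1)] by simp
qed

lemma two_neq_zero_if_odd_card:
  assumes "odd CARD('a::{field,finite})"
  shows "(2::'a) \<noteq> 0"
proof
  assume two: "(2::'a) = 0"
  have "(\<Sum>x\<in>(UNIV::'a set). (1::'a)) = 0"
    by (rule sum_involution_eq_0[where h = "\<lambda>x. x + 1"]) (use two in \<open>simp_all add: add.assoc\<close>)
  then have "of_nat CARD('a) = (0::'a)" by simp
  moreover obtain k where "CARD('a) = 2*k + 1" using assms oddE by blast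
  ultimately show False using two by simp
qed

theorem theorem6p2:
  assumes "odd CARD('a::{field,finite})" and "CARD('a) \<ge> 5"
  shows "UGamma_lines \<noteq> ({} :: 'a pt set set)
    \<and> (\<forall>g\<in>Gq. \<forall>l\<in>(UGamma_lines :: 'a pt set set). act_line g l \<in> UGamma_lines)
    \<and> (\<forall>l1\<in>(UGamma_lines :: 'a pt set set). \<forall>l2\<in>UGamma_lines. \<exists>g\<in>Gq. act_line g l1 = l2)
    \<and> (\<forall>l\<in>(UGamma_lines :: 'a pt set set). card (stabilizer l) = CARD('a) - 1)
    \<and> line_through (vec4 0 0 0 1) (vec4 (0::'a) 1 0 0) \<in> UGamma_lines
    \<and> (\<forall>g\<in>stabilizer (line_through (vec4 0 0 0 1) (vec4 (0::'a) 1 0 0)).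
         \<exists>d::'a. d \<noteq> 0 \<and>
           g = proj_map (mat4 (vec4 1 0 0 0) (vec4 0 d 0 0) (vec4 0 0 (d^2) 0) (vec4 0 0 0 (d^3))))"
proof -
  have two: "(2::'a) \<noteq> 0" using assms(1) by (rule two_neq_zero_if_odd_card)
  have diagonal: "cubic_mat 1 0 0 d = mat4 (vec4 1 0 0 0) (vec4 0 d 0 0) (vec4 0 0 (d^2) 0) (vec4 0 0 0 (d^3))"
    for d :: 'a by (simp add: cubic_mat_def)
  have "UGamma_line0 \<in> (UGamma_lines :: 'a pt set set)" by (rule UGamma_line0_in_UGamma_lines)
  moreover have "\<forall>g\<in>Gq. \<forall>l\<in>(UGamma_lines :: 'a pt set set). g ` l \<in> UGamma_lines"
    using Gq_image_UGamma_lines by blast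
  moreover have "\<forall>l1\<in>(UGamma_lines :: 'a pt set set). \<forall>l2\<in>UGamma_lines. \<exists>g\<in>Gq. g ` l1 = l2"
    using UGamma_lines_transitive[OF two] by blast
  moreover have "\<forall>l\<in>(UGamma_lines :: 'a pt set set). card (stabilizer l) = CARD('a) - 1"
    using card_stabilizer_UGamma_line[OF two] by blast
  moreover have "\<forall>g\<in>stabilizer (UGamma_line0 :: 'a pt set). \<exists>d. d \<noteq> 0 \<and>
      g = proj_map (mat4 (vec4 1 0 0 0) (vec4 0 d 0 0) (vec4 0 0 (d^2) 0) (vec4 0 0 0 (d^3)))"
    unfolding stabilizer_UGamma_line0[OF two] diagonal[symmetric] by blast
  ultimately show ?thesis unfolding act_line_def by blast
qed

end
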